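(* Let $G$ be an ADMG and let $v_1,v_2,v_3$ be distinct vertices of $G$ such that $G$ contains the edges $v_1\to v_2$, $v_2\to v_3$, $v_2\leftrightarrow v_3$ and $v_1\to v_3$. Then the ADMG $G'$ obtained from $G$ by deleting the edge $v_1\to v_3$ is Markov equivalent to $G$.
   Context: An ADMG (acyclic directed mixed graph) has directed edges $v\to w$ forming no directed cycle and bidirected edges $v\leftrightarrow w$ (unordered pairs), $v\neq w$. A path from $a$ to $b$ is a sequence $v_1,e_1,\dots,e_{k-1},v_k$ with $v_1=a\ne b=v_k$ (vertices may repeat), each $e_j$ an edge (directed either way, or bidirected) between $v_j,v_{j+1}$; an internal $v_j$ is a collider if both $e_{j-1},e_j$ have an arrowhead at $v_j$ (directed into $v_j$ or bidirected). $x$ is a descendant of $v$ if $x=v$ or there is a directed path from $v$ to $x$. The path is active given $Z\subseteq V\setminus\{a,b\}$ if every internal non-collider is not in $Z$ and every collider is in $Z$ or has a descendant in $Z$. $a,b$ are d-connected given $Z$ if an active path exists, otherwise d-separated. Two graphs on the same vertex set are Markov equivalent if they have the same d-separation statements for all $a,b,Z$. *)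

theory Defs
  imports Main
begin

text \<open>An ADMG on a finite vertex set: directed edges dir (pairs (v,w) meaning v to w),
  bidirected edges bi (a symmetric relation, (v,w) and (w,v) both present).\<close>

record 'a admg =
  verts :: "'a set"
  dir :: "'a rel"
  bi :: "'a rel"

definition is_admg :: "'a admg \<Rightarrow> bool" where
  "is_admg G \<longleftrightarrow> finite (verts G)
     \<and> dir G \<subseteq> verts G \<times> verts G \<and> bi G \<subseteq> verts G \<times> verts G
     \<and> (\<forall>v. (v, v) \<notin> (dir G)\<^sup>+)
     \<and> sym (bi G) \<and> (\<forall>v. (v, v) \<notin> bi G)"

text \<open>Kind of the edge traversed from v_j to v_(j+1) along a path.\<close>
datatype ekind = Fwd | Bwd | Bidir

fun edge_ok :: "'a admg \<Rightarrow> 'a \<Rightarrow> 'a \<Rightarrow> ekind \<Rightarrow> bool" where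
  "edge_ok G v w Fwd = ((v, w) \<in> dir G)"
| "edge_ok G v w Bwd = ((w, v) \<in> dir G)"
| "edge_ok G v w Bidir = ((v, w) \<in> bi G)"

fun head_at_end :: "ekind \<Rightarrow> bool" where
  "head_at_end Fwd = True" | "head_at_end Bwd = False" | "head_at_end Bidir = True"

fun head_at_start :: "ekind \<Rightarrow> bool" where
  "head_at_start Fwd = False" | "head_at_start Bwd = True" | "head_at_start Bidir = True"

text \<open>A path: vertex list vs = [v_1..v_k] and edge list es = [e_1..e_(k-1)]; vertices may repeat.\<close>
definition is_path :: "'a admg \<Rightarrow> 'a \<Rightarrow> 'a \<Rightarrow> 'a list \<Rightarrow> ekind list \<Rightarrow> bool" where
  "is_path G a b vs es \<longleftrightarrow> length vs = length es + 1 \<and> vs \<noteq> [] \<and>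
     hd vs = a \<and> last vs = b \<and> a \<noteq> b \<and> set vs \<subseteq> verts G \<and>
     (\<forall>j < length es. edge_ok G (vs ! j) (vs ! Suc j) (es ! j))"

definition is_collider :: "ekind list \<Rightarrow> nat \<Rightarrow> bool" where
  "is_collider es j \<longleftrightarrow> head_at_end (es ! (j - 1)) \<and> head_at_start (es ! j)"

definition descendant :: "'a admg \<Rightarrow> 'a \<Rightarrow> 'a \<Rightarrow> bool" where
  "descendant G v x \<longleftrightarrow> (v, x) \<in> (dir G)\<^sup>*"

definition active :: "'a admg \<Rightarrow> 'a set \<Rightarrow> 'a list \<Rightarrow> ekind list \<Rightarrow> bool" where
  "active G Z vs es \<longleftrightarrow> (\<forall>j. 0 < j \<and> j < length es \<longrightarrow>
      (is_collider es j \<longrightarrow> (\<exists>x\<in>Z. descendant G (vs ! j) x)) \<and>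
      (\<not> is_collider es j \<longrightarrow> vs ! j \<notin> Z))"

definition d_connected :: "'a admg \<Rightarrow> 'a \<Rightarrow> 'a \<Rightarrow> 'a set \<Rightarrow> bool" where
  "d_connected G a b Z \<longleftrightarrow> (\<exists>vs es. is_path G a b vs es \<and> active G Z vs es)"

definition d_separated :: "'a admg \<Rightarrow> 'a \<Rightarrow> 'a \<Rightarrow> 'a set \<Rightarrow> bool" where
  "d_separated G a b Z \<longleftrightarrow> \<not> d_connected G a b Z"

definition markov_equivalent :: "'a admg \<Rightarrow> 'a admg \<Rightarrow> bool" where
  "markov_equivalent G H \<longleftrightarrow> verts G = verts H \<and>
     (\<forall>a\<in>verts G. \<forall>b\<in>verts G. \<forall>Z. a \<noteq> b \<and> Z \<subseteq> verts G - {a, b} \<longrightarrow>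
        (d_separated G a b Z \<longleftrightarrow> d_separated H a b Z))"

end

theory Submission
  imports Defs
begin

(* Every use of the edge v1 -> v3 on an active path can be replaced by a detour through v2:
   v1 -> v2 -> v3 when v2 is not conditioned on, and v1 -> v2 <-> v3 when it is.  The detour
   keeps the arrowhead marks at v1 and v3, so the collider status of the old vertices is
   unchanged, and v2 is a non-collider outside Z, respectively a collider in Z.  Deleting
   v1 -> v3 does not change the descendant relation, since v1 -> v2 -> v3 remains, so
   active paths of the smaller graph stay active in G. *)

definition subdivide_verts :: "nat \<Rightarrow> 'a \<Rightarrow> 'a list \<Rightarrow> 'a list" where
  "subdivide_verts j x vs = take (Suc j) vs @ x # drop (Suc j) vs"

definition subdivide_edges :: "nat \<Rightarrow> ekind \<Rightarrow> ekind \<Rightarrow> ekind list \<Rightarrow> ekind list" where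
  "subdivide_edges j k1 k2 es = take j es @ k1 # k2 # drop (Suc j) es"

lemma length_subdivide_verts:
  "Suc j \<le> length vs \<Longrightarrow> length (subdivide_verts j x vs) = Suc (length vs)"
  by (simp add: subdivide_verts_def)

lemma length_subdivide_edges:
  "j < length es \<Longrightarrow> length (subdivide_edges j k1 k2 es) = Suc (length es)"
  by (simp add: subdivide_edges_def)

lemma nth_subdivide_verts:
  assumes "Suc j \<le> length vs" "i \<le> length vs"
  shows "subdivide_verts j x vs ! i =
    (if i \<le> j then vs ! i else if i = Suc j then x else vs ! (i - 1))"
  using assms
  by (auto simp: subdivide_verts_def nth_append min_def nth_Cons' numeral_2_eq_2 Suc_diff_Suc)

lemma nth_subdivide_edges:
  assumes "j < length es" "i \<le> length es"
  shows "subdivide_edges j k1 k2 es ! i =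
    (if i < j then es ! i else if i = j then k1 else if i = Suc j then k2 else es ! (i - 1))"
  using assms
  by (auto simp: subdivide_edges_def nth_append min_def nth_Cons' numeral_2_eq_2 Suc_diff_Suc)

lemma is_path_subdivide:
  assumes path: "is_path G a b vs es" and j: "j < length es" and x: "x \<in> verts G"
    and k1: "edge_ok G (vs ! j) x k1" and k2: "edge_ok G x (vs ! Suc j) k2"
  shows "is_path G a b (subdivide_verts j x vs) (subdivide_edges j k1 k2 es)"
proof -
  let ?vs = "subdivide_verts j x vs" and ?es = "subdivide_edges j k1 k2 es"
  have len: "length vs = length es + 1" and "vs \<noteq> []" "hd vs = a" "last vs = b"
    and sub: "set vs \<subseteq> verts G"
    and edges: "\<And>i. i < length es \<Longrightarrow> edge_ok G (vs ! i) (vs ! Suc i) (es ! i)"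
    using path unfolding is_path_def by auto
  have len': "length ?vs = length ?es + 1" "length ?es = Suc (length es)"
    using len j by (simp_all add: length_subdivide_verts length_subdivide_edges)
  have nv: "\<And>i. i \<le> length vs \<Longrightarrow> ?vs ! i =
      (if i \<le> j then vs ! i else if i = Suc j then x else vs ! (i - 1))"
    using len j by (intro nth_subdivide_verts) auto
  have ne: "\<And>i. i \<le> length es \<Longrightarrow> ?es ! i =
      (if i < j then es ! i else if i = j then k1 else if i = Suc j then k2 else es ! (i - 1))"
    using j by (rule nth_subdivide_edges)
  have "?vs \<noteq> []" using len' by auto
  moreover have "hd ?vs = a"
    using nv[of 0] \<open>?vs \<noteq> []\<close> \<open>vs \<noteq> []\<close> \<open>hd vs = a\<close> by (simp add: hd_conv_nth)
  moreover have "last ?vs = b"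
    using nv[of "length vs"] len len' j \<open>?vs \<noteq> []\<close> \<open>vs \<noteq> []\<close> \<open>last vs = b\<close>
    by (simp add: last_conv_nth)
  moreover have "set ?vs \<subseteq> verts G"
    using sub x by (auto simp: subdivide_verts_def dest: in_set_takeD in_set_dropD)
  moreover have "edge_ok G (?vs ! i) (?vs ! Suc i) (?es ! i)" if i: "i < length ?es" for i
  proof -
    consider "i < j" | "i = j" | "i = Suc j" | "Suc j < i" by linarith
    then show ?thesis
      using nv[of i] nv[of "Suc i"] ne[of i] edges[of i] edges[of "i - 1"] k1 k2 i j len len'
      by cases auto
  qed
  ultimately show ?thesis
    using len' path unfolding is_path_def by auto
qed

lemma is_collider_subdivide_edges:
  assumes j: "j < length es" and i: "0 < i" "i \<le> length es"
    and start: "head_at_start k1 = head_at_start (es ! j)"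
    and end': "head_at_end k2 = head_at_end (es ! j)"
  shows "is_collider (subdivide_edges j k1 k2 es) i =
    (if i \<le> j then is_collider es i
     else if i = Suc j then head_at_end k1 \<and> head_at_start k2
     else is_collider es (i - 1))"
  using nth_subdivide_edges[OF j, of i k1 k2] nth_subdivide_edges[OF j, of "i - 1" k1 k2]
    i j start end' unfolding is_collider_def
  by (cases "i = Suc (Suc j)") (auto simp: numeral_2_eq_2)

lemma active_subdivide:
  assumes act: "active G Z vs es" and len: "length vs = length es + 1" and j: "j < length es"
    and start: "head_at_start k1 = head_at_start (es ! j)"
    and end': "head_at_end k2 = head_at_end (es ! j)"
    and mid: "head_at_end k1 \<and> head_at_start k2 \<longleftrightarrow> x \<in> Z"
  shows "active G Z (subdivide_verts j x vs) (subdivide_edges j k1 k2 es)"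
  unfolding active_def
proof (intro allI impI)
  let ?vs = "subdivide_verts j x vs" and ?es = "subdivide_edges j k1 k2 es"
  fix i assume "0 < i \<and> i < length ?es"
  then have i: "0 < i" "i \<le> length es" using j by (simp_all add: length_subdivide_edges)
  have old: "\<And>i. 0 < i \<Longrightarrow> i < length es \<Longrightarrow>
      (is_collider es i \<longrightarrow> (\<exists>z\<in>Z. descendant G (vs ! i) z)) \<and>
      (\<not> is_collider es i \<longrightarrow> vs ! i \<notin> Z)"
    using act unfolding active_def by blast
  have "descendant G x x" by (simp add: descendant_def)
  then show "(is_collider ?es i \<longrightarrow> (\<exists>z\<in>Z. descendant G (?vs ! i) z)) \<and>
      (\<not> is_collider ?es i \<longrightarrow> ?vs ! i \<notin> Z)"
    using is_collider_subdivide_edges[OF j i start end'] nth_subdivide_verts[of j vs i x]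
      old[of i] old[of "i - 1"] mid i j len
    by (auto split: if_splits)
qed

definition traverses_dir_edge :: "'a \<Rightarrow> 'a \<Rightarrow> 'a \<Rightarrow> 'a \<Rightarrow> ekind \<Rightarrow> bool" where
  "traverses_dir_edge p q u w e \<longleftrightarrow> (e = Fwd \<and> u = p \<and> w = q) \<or> (e = Bwd \<and> u = q \<and> w = p)"

definition dir_edge_uses :: "'a \<Rightarrow> 'a \<Rightarrow> 'a list \<Rightarrow> ekind list \<Rightarrow> nat set" where
  "dir_edge_uses p q vs es =
     {i. i < length es \<and> traverses_dir_edge p q (vs ! i) (vs ! Suc i) (es ! i)}"

lemma card_dir_edge_uses_subdivide:
  assumes len: "length vs = length es + 1" and j: "j \<in> dir_edge_uses p q vs es"
    and xp: "x \<noteq> p" and xq: "x \<noteq> q"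
  shows "card (dir_edge_uses p q (subdivide_verts j x vs) (subdivide_edges j k1 k2 es))
     < card (dir_edge_uses p q vs es)"
proof -
  let ?U = "dir_edge_uses p q vs es"
  have jl: "j < length es" using j unfolding dir_edge_uses_def by auto
  define shift where "shift i = (if i < j then i else Suc i)" for i :: nat
  have fin: "finite ?U" unfolding dir_edge_uses_def by auto
  have "dir_edge_uses p q (subdivide_verts j x vs) (subdivide_edges j k1 k2 es) \<subseteq> shift ` (?U - {j})"
  proof
    fix i assume "i \<in> dir_edge_uses p q (subdivide_verts j x vs) (subdivide_edges j k1 k2 es)"
    then have i: "i \<le> length es"
      and use: "traverses_dir_edge p q (subdivide_verts j x vs ! i)
                  (subdivide_verts j x vs ! Suc i) (subdivide_edges j k1 k2 es ! i)"
      using jl by (auto simp: dir_edge_uses_def length_subdivide_edges)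
    have "i < j \<Longrightarrow> i \<in> ?U - {j}" "Suc j < i \<Longrightarrow> i - 1 \<in> ?U - {j}" "i \<noteq> j" "i \<noteq> Suc j"
      using use nth_subdivide_verts[of j vs i x] nth_subdivide_verts[of j vs "Suc i" x]
        nth_subdivide_edges[OF jl i] i jl len xp xq
      by (auto simp: dir_edge_uses_def traverses_dir_edge_def)
    then show "i \<in> shift ` (?U - {j})"
      unfolding shift_def by (cases "i < j") (auto intro: image_eqI[of _ _ "i - 1"])
  qed
  then have "card (dir_edge_uses p q (subdivide_verts j x vs) (subdivide_edges j k1 k2 es))
      \<le> card (shift ` (?U - {j}))"
    using fin by (intro card_mono) auto
  also have "\<dots> \<le> card (?U - {j})" by (rule card_image_le) (use fin in auto)
  also have "\<dots> < card ?U" using fin j by (rule card_Diff1_less)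
  finally show ?thesis .
qed

lemma detour_through_middle:
  assumes "(v1, v2) \<in> dir G" "(v2, v3) \<in> dir G" "(v2, v3) \<in> bi G" "(v3, v2) \<in> bi G"
    and "traverses_dir_edge v1 v3 u w e"
  obtains k1 k2 where "edge_ok G u v2 k1" "edge_ok G v2 w k2"
    "head_at_start k1 = head_at_start e" "head_at_end k2 = head_at_end e"
    "head_at_end k1 \<and> head_at_start k2 \<longleftrightarrow> v2 \<in> Z"
proof (cases e)
  case Fwd
  then show ?thesis
    using that[of Fwd "if v2 \<in> Z then Bidir else Fwd"] assms
    by (auto simp: traverses_dir_edge_def)
next
  case Bwd
  then show ?thesis
    using that[of "if v2 \<in> Z then Bidir else Bwd" Bwd] assms
    by (auto simp: traverses_dir_edge_def)
qed (use assms in \<open>simp add: traverses_dir_edge_def\<close>)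

lemma active_path_avoiding_shortcut:
  assumes "v2 \<in> verts G" "v1 \<noteq> v2" "v2 \<noteq> v3" "sym (bi G)"
    and "(v1, v2) \<in> dir G" "(v2, v3) \<in> dir G" "(v2, v3) \<in> bi G"
  shows "is_path G a b vs es \<Longrightarrow> active G Z vs es \<Longrightarrow>
    \<exists>vs' es'. is_path G a b vs' es' \<and> active G Z vs' es' \<and> dir_edge_uses v1 v3 vs' es' = {}"
proof (induction "card (dir_edge_uses v1 v3 vs es)" arbitrary: vs es rule: less_induct)
  case less
  show ?case
  proof (cases "dir_edge_uses v1 v3 vs es = {}")
    case True
    then show ?thesis using less.prems by blast
  next
    case False
    then obtain j where j: "j \<in> dir_edge_uses v1 v3 vs es" by blast
    then have jl: "j < length es"
      and use: "traverses_dir_edge v1 v3 (vs ! j) (vs ! Suc j) (es ! j)"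
      unfolding dir_edge_uses_def by auto
    have len: "length vs = length es + 1" using less.prems unfolding is_path_def by auto
    have "(v3, v2) \<in> bi G" using assms(4,7) unfolding sym_def by blast
    with assms obtain k1 k2 where k: "edge_ok G (vs ! j) v2 k1" "edge_ok G v2 (vs ! Suc j) k2"
      "head_at_start k1 = head_at_start (es ! j)" "head_at_end k2 = head_at_end (es ! j)"
      "head_at_end k1 \<and> head_at_start k2 \<longleftrightarrow> v2 \<in> Z"
      using detour_through_middle[OF _ _ _ _ use] by metis
    have "is_path G a b (subdivide_verts j v2 vs) (subdivide_edges j k1 k2 es)"
      using is_path_subdivide[OF less.prems(1) jl assms(1) k(1,2)] .
    moreover have "active G Z (subdivide_verts j v2 vs) (subdivide_edges j k1 k2 es)"
      using active_subdivide[OF less.prems(2) len jl k(3-5)] .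
    moreover have "card (dir_edge_uses v1 v3 (subdivide_verts j v2 vs) (subdivide_edges j k1 k2 es))
        < card (dir_edge_uses v1 v3 vs es)"
      using card_dir_edge_uses_subdivide[OF len j] assms(2,3) by auto
    ultimately show ?thesis using less.hyps by blast
  qed
qed

lemma is_path_delete_unused_dir_edge:
  assumes "is_path G a b vs es" "dir_edge_uses p q vs es = {}"
  shows "is_path (G\<lparr>dir := dir G - {(p, q)}\<rparr>) a b vs es"
proof -
  have "edge_ok (G\<lparr>dir := dir G - {(p, q)}\<rparr>) u w e"
    if "edge_ok G u w e" "\<not> traverses_dir_edge p q u w e" for u w e
    using that by (cases e) (auto simp: traverses_dir_edge_def)
  then show ?thesis
    using assms unfolding is_path_def dir_edge_uses_def by auto
qed

lemma rtrancl_Diff_shortcut: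
  assumes "(a, b) \<in> r" "(b, c) \<in> r" "a \<noteq> b" "b \<noteq> c"
  shows "(r - {(a, c)})\<^sup>* = r\<^sup>*"
proof (rule antisym)
  show "(r - {(a, c)})\<^sup>* \<subseteq> r\<^sup>*" by (rule rtrancl_mono) blast
  have "(a, b) \<in> r - {(a, c)}" "(b, c) \<in> r - {(a, c)}" using assms by auto
  then have "(a, c) \<in> (r - {(a, c)})\<^sup>*" by (rule rtrancl_into_rtrancl[OF r_into_rtrancl])
  then have "r \<subseteq> (r - {(a, c)})\<^sup>*" by auto
  then show "r\<^sup>* \<subseteq> (r - {(a, c)})\<^sup>*" by (rule rtrancl_subset_rtrancl)
qed

lemma d_connected_subgraph:
  assumes "verts H \<subseteq> verts G" "dir H \<subseteq> dir G" "bi H \<subseteq> bi G" "d_connected H a b Z"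
  shows "d_connected G a b Z"
proof -
  obtain vs es where path: "is_path H a b vs es" and act: "active H Z vs es"
    using assms(4) unfolding d_connected_def by blast
  have "edge_ok H u w e \<Longrightarrow> edge_ok G u w e" for u w e
    using assms(2,3) by (cases e) auto
  then have "is_path G a b vs es"
    using path assms(1) unfolding is_path_def by auto
  moreover have "descendant H u z \<Longrightarrow> descendant G u z" for u z
    using rtrancl_mono[OF assms(2)] unfolding descendant_def by blast
  then have "active G Z vs es"
    using act unfolding active_def by blast
  ultimately show ?thesis unfolding d_connected_def by blast
qed

theorem mainTheorem9:
  fixes G :: "'a admg" and v1 v2 v3 :: 'a
  assumes "is_admg G"
    and "v1 \<in> verts G" and "v2 \<in> verts G" and "v3 \<in> verts G"
    and "v1 \<noteq> v2" and "v2 \<noteq> v3" and "v1 \<noteq> v3"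
    and "(v1, v2) \<in> dir G" and "(v2, v3) \<in> dir G" and "(v2, v3) \<in> bi G"
    and "(v1, v3) \<in> dir G"
  shows "markov_equivalent G (G\<lparr>dir := dir G - {(v1, v3)}\<rparr>)"
proof -
  define H where "H = G\<lparr>dir := dir G - {(v1, v3)}\<rparr>"
  have same_descendants: "descendant H = descendant G"
    using rtrancl_Diff_shortcut[of v1 v2 "dir G" v3] assms(5,6,8,9)
    unfolding H_def descendant_def by simp
  have "d_connected G a b Z \<longleftrightarrow> d_connected H a b Z" for a b Z
  proof
    assume "d_connected G a b Z"
    then obtain vs es where "is_path G a b vs es" "active G Z vs es"
      "dir_edge_uses v1 v3 vs es = {}"
      using active_path_avoiding_shortcut[of v2 G v1 v3] assms(1,3,5,6,8-10)
      unfolding d_connected_def is_admg_def by blast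
    then have "is_path H a b vs es" "active H Z vs es"
      using is_path_delete_unused_dir_edge same_descendants unfolding H_def active_def by simp_all
    then show "d_connected H a b Z" unfolding d_connected_def by blast
  qed (rule d_connected_subgraph, auto simp: H_def)
  then show ?thesis
    unfolding markov_equivalent_def d_separated_def H_def by simp
qed

end
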